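(* Let $X$ be a Banach space with $n(X)=1$. If $X$ has the $\mathbf{L}_{p,p}$-nu, then the norm of $X$ is strongly subdifferentiable (at every point).
   Context: Let $X$ be a Banach space over $\mathbb{K}\in\{\mathbb{R},\mathbb{C}\}$, $\mathcal{L}(X)$ the bounded linear operators on $X$. $\Pi(X)=\{(x,x^* )\in S_X\times S_{X^*}: x^*(x)=1\}$; $v(T)=\sup\{|x^*(Tx)|:(x,x^* )\in\Pi(X)\}$; $n(X)=\inf\{v(T): T\in\mathcal{L}(X),\ \|T\|=1\}$. $X$ has the $\mathbf{L}_{p,p}$-nu if for every $\varepsilon>0$ and $(x,x^* )\in\Pi(X)$ there is $\eta(\varepsilon,(x,x^* ))>0$ such that whenever $T\in\mathcal{L}(X)$ with $v(T)=1$ satisfies $|x^*(Tx)|>1-\eta(\varepsilon,(x,x^* ))$, there is $S\in\mathcal{L}(X)$ with $v(S)=1$, $|x^*(Sx)|=1$ and $\|S-T\|<\varepsilon$. The norm of $X$ is strongly subdifferentiable (SSD) at $x\in X$ if the limit $\lim_{t\to0^+}\frac{\|x+th\|-\|x\|}{t}$ exists uniformly in $h\in B_X$; the norm is SSD if it is SSD at every point. *)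

theory Defs
  imports "HOL-Analysis.Analysis"
begin

text \<open>Scalars K are represented by a type 'k (real or complex) together with a scalar
  action sc :: 'k => 'a => 'a on the underlying real Banach space 'a.
  For K = R we use sc = scaleR; for K = C, sc is a complex structure (cplx_action).\<close>

definition cplx_action :: "(complex \<Rightarrow> 'a::real_normed_vector \<Rightarrow> 'a) \<Rightarrow> bool" where
  "cplx_action sc \<longleftrightarrow>
     (\<forall>x. sc 1 x = x) \<and> (\<forall>a b x. sc (a * b) x = sc a (sc b x)) \<and>
     (\<forall>a b x. sc (a + b) x = sc a x + sc b x) \<and> (\<forall>a x y. sc a (x + y) = sc a x + sc a y) \<and>
     (\<forall>r x. sc (complex_of_real r) x = r *\<^sub>R x) \<and> (\<forall>a x. norm (sc a x) = cmod a * norm x)"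

definition is_op :: "('k \<Rightarrow> 'a \<Rightarrow> 'a) \<Rightarrow> ('a::real_normed_vector \<Rightarrow> 'a) \<Rightarrow> bool" where
  "is_op sc T \<longleftrightarrow> bounded_linear T \<and> (\<forall>c x. T (sc c x) = sc c (T x))"

definition is_functional :: "('k::real_normed_field \<Rightarrow> 'a \<Rightarrow> 'a) \<Rightarrow> ('a::real_normed_vector \<Rightarrow> 'k) \<Rightarrow> bool" where
  "is_functional sc f \<longleftrightarrow> bounded_linear f \<and> (\<forall>c x. f (sc c x) = c * f x)"

definition PiX :: "('k::real_normed_field \<Rightarrow> 'a \<Rightarrow> 'a) \<Rightarrow> ('a::real_normed_vector \<times> ('a \<Rightarrow> 'k)) set" where
  "PiX sc = {(x, f). norm x = 1 \<and> is_functional sc f \<and> onorm f = 1 \<and> f x = 1}"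

definition numrad :: "('k::real_normed_field \<Rightarrow> 'a \<Rightarrow> 'a) \<Rightarrow> ('a::real_normed_vector \<Rightarrow> 'a) \<Rightarrow> real" where
  "numrad sc T = (SUP p\<in>PiX sc. norm (snd p (T (fst p))))"

definition num_index :: "('k::real_normed_field \<Rightarrow> 'a \<Rightarrow> 'a::real_normed_vector) \<Rightarrow> real" where
  "num_index sc = Inf {numrad sc T | T. is_op sc T \<and> onorm T = 1}"

definition Lpp_nu :: "('k::real_normed_field \<Rightarrow> 'a \<Rightarrow> 'a::real_normed_vector) \<Rightarrow> bool" where
  "Lpp_nu sc \<longleftrightarrow>
    (\<forall>\<epsilon>>0. \<forall>x f. (x, f) \<in> PiX sc \<longrightarrow>
      (\<exists>\<eta>>0. \<forall>T. is_op sc T \<and> numrad sc T = 1 \<and> norm (f (T x)) > 1 - \<eta> \<longrightarrow>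
         (\<exists>S. is_op sc S \<and> numrad sc S = 1 \<and> norm (f (S x)) = 1 \<and>
              onorm (\<lambda>y. S y - T y) < \<epsilon>)))"

definition norm_SSD_at :: "'a::real_normed_vector \<Rightarrow> bool" where
  "norm_SSD_at x \<longleftrightarrow>
    (\<exists>D::'a \<Rightarrow> real. \<forall>\<epsilon>>0. \<exists>\<delta>>0. \<forall>t h. 0 < t \<and> t < \<delta> \<and> norm h \<le> 1 \<longrightarrow>
        \<bar>(norm (x + t *\<^sub>R h) - norm x) / t - D h\<bar> < \<epsilon>)"

end

theory Submission
  imports Defs
begin

text \<open>Since \<open>n(X) = 1\<close>, every operator satisfies \<open>\<parallel>S\<parallel> \<le> v(S)\<close>. Fix a unit vector \<open>u\<close> with
  \<open>(u, u\<^sup>*) \<in> \<Pi>(X)\<close> and a norm-one functional \<open>g\<close> with \<open>g(u)\<close> close to 1. The rank-one operator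
  \<open>T y = g(y) u\<close> has \<open>v(T) = \<parallel>T\<parallel> = 1\<close> and \<open>|u\<^sup>*(T u)|\<close> close to 1, so the \<open>L\<^sub>p\<^sub>,\<^sub>p\<close>-nu gives a
  nearby \<open>S\<close> with \<open>\<parallel>S\<parallel> \<le> v(S) = 1\<close> and \<open>|u\<^sup>*(S u)| = 1\<close>; a unimodular multiple of \<open>u\<^sup>* \<circ> S\<close> is
  then a functional norming \<open>u\<close> and close to \<open>g\<close>. Functionals norming \<open>u + t h\<close> bound the difference
  quotients of the norm at \<open>u\<close> from above, those norming \<open>u\<close> bound them from below, so the
  quotients converge uniformly in \<open>h \<in> B\<^sub>X\<close>. Norming functionals exist by Hahn--Banach, proved here
  from Zorn's lemma via minimal sublinear functionals.\<close>

section \<open>Hahn--Banach via minimal sublinear functionals\<close>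

definition sublinear :: "('a::real_vector \<Rightarrow> real) \<Rightarrow> bool" where
  "sublinear p \<longleftrightarrow> (\<forall>a b. p (a + b) \<le> p a + p b) \<and> (\<forall>t a. t \<ge> 0 \<longrightarrow> p (t *\<^sub>R a) = t * p a)"

lemma sublinear_add: "sublinear p \<Longrightarrow> p (a + b) \<le> p a + p b"
  unfolding sublinear_def by blast

lemma sublinear_scaleR: "sublinear p \<Longrightarrow> t \<ge> 0 \<Longrightarrow> p (t *\<^sub>R a) = t * p a"
  unfolding sublinear_def by blast

lemma sublinear_0: "sublinear p \<Longrightarrow> p 0 = 0"
  using sublinear_scaleR[of p 0 0] by simp

lemma sublinear_minus_le: "sublinear p \<Longrightarrow> - p (- y) \<le> p y"
  using sublinear_add[of p y "- y"] sublinear_0[of p] by simp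

lemma sublinear_norm: "sublinear norm"
  unfolding sublinear_def by (auto simp: norm_triangle_ineq)

lemma sublinearI_le:
  fixes p :: "'a::real_vector \<Rightarrow> real"
  assumes add: "\<And>a b. p (a + b) \<le> p a + p b" and zero: "p 0 = 0"
    and scale_le: "\<And>t a. t > 0 \<Longrightarrow> p (t *\<^sub>R a) \<le> t * p a"
  shows "sublinear p"
proof -
  have "p (t *\<^sub>R a) = t * p a" if t: "t > 0" for t a
  proof (rule antisym)
    have "p a = p (inverse t *\<^sub>R (t *\<^sub>R a))" using t by simp
    also have "\<dots> \<le> inverse t * p (t *\<^sub>R a)" using t by (intro scale_le) simp
    finally show "t * p a \<le> p (t *\<^sub>R a)" using t by (simp add: field_simps)
  qed (rule scale_le[OF t])
  then show ?thesis
    unfolding sublinear_def using add zero by (metis less_eq_real_def mult_zero_left scaleR_zero_left)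
qed

text \<open>The shift of \<open>p\<close> in direction \<open>v\<close> lies below \<open>p\<close> and is again sublinear, yet it is at most
  \<open>- p v\<close> at \<open>- v\<close>. Hence a minimal sublinear functional is odd, i.e. linear.\<close>

definition sublinear_shift :: "('a::real_vector \<Rightarrow> real) \<Rightarrow> 'a \<Rightarrow> 'a \<Rightarrow> real" where
  "sublinear_shift p v y = (INF t\<in>{0..}. p (y + t *\<^sub>R v) - t * p v)"

lemma sublinear_shift_le:
  assumes "sublinear p" "t \<ge> 0"
  shows "sublinear_shift p v y \<le> p (y + t *\<^sub>R v) - t * p v"
proof -
  have "- p (- y) \<le> p (y + t *\<^sub>R v) - t * p v" if "t \<ge> 0" for t
    using sublinear_add[OF assms(1), of "y + t *\<^sub>R v" "- y"] sublinear_scaleR[OF assms(1) that, of v]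
    by simp
  then have "bdd_below ((\<lambda>t. p (y + t *\<^sub>R v) - t * p v) ` {0..})"
    by (intro bdd_belowI2) auto
  then show ?thesis
    unfolding sublinear_shift_def by (rule cINF_lower) (use assms in auto)
qed

lemma sublinear_shift_greatest:
  "(\<And>t. t \<ge> 0 \<Longrightarrow> c \<le> p (y + t *\<^sub>R v) - t * p v) \<Longrightarrow> c \<le> sublinear_shift p v y"
  unfolding sublinear_shift_def by (rule cINF_greatest) auto

lemma sublinear_shift_le_self: "sublinear p \<Longrightarrow> sublinear_shift p v \<le> p"
  using sublinear_shift_le[of p 0] by (simp add: le_fun_def)

lemma sublinear_shift_minus: "sublinear p \<Longrightarrow> sublinear_shift p v (- v) \<le> - p v"
  using sublinear_shift_le[of p 1 v "- v"] sublinear_0[of p] by simp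

lemma sublinear_sublinear_shift:
  assumes p: "sublinear p"
  shows "sublinear (sublinear_shift p v)" (is "sublinear ?q")
proof (rule sublinearI_le)
  fix a b
  have "?q (a + b) - (p (b + t *\<^sub>R v) - t * p v) \<le> ?q a" if t: "t \<ge> 0" for t
  proof (rule sublinear_shift_greatest)
    fix s :: real assume s: "s \<ge> 0"
    have "?q (a + b) \<le> p ((a + s *\<^sub>R v) + (b + t *\<^sub>R v)) - (s + t) * p v"
      using sublinear_shift_le[OF p, of "s + t" v "a + b"] s t by (simp add: algebra_simps)
    then show "?q (a + b) - (p (b + t *\<^sub>R v) - t * p v) \<le> p (a + s *\<^sub>R v) - s * p v"
      using sublinear_add[OF p, of "a + s *\<^sub>R v" "b + t *\<^sub>R v"] by (simp add: algebra_simps)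
  qed
  then have "?q (a + b) - ?q a \<le> ?q b"
    by (intro sublinear_shift_greatest) (auto simp: algebra_simps)
  then show "?q (a + b) \<le> ?q a + ?q b" by simp
next
  have "?q 0 \<le> 0" using sublinear_shift_le[OF p, of 0 v 0] sublinear_0[OF p] by simp
  moreover have "0 \<le> ?q 0" by (rule sublinear_shift_greatest) (simp add: sublinear_scaleR[OF p])
  ultimately show "?q 0 = 0" by simp
next
  fix c a :: 'a and t :: real assume t: "t > 0"
  have "?q (t *\<^sub>R a) / t \<le> ?q a"
  proof (rule sublinear_shift_greatest)
    fix s :: real assume s: "s \<ge> 0"
    have "?q (t *\<^sub>R a) \<le> p (t *\<^sub>R (a + s *\<^sub>R v)) - (t * s) * p v"
      using sublinear_shift_le[OF p, of "t * s" v "t *\<^sub>R a"] s t by (simp add: algebra_simps)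
    also have "\<dots> = t * (p (a + s *\<^sub>R v) - s * p v)"
      using sublinear_scaleR[OF p, of t "a + s *\<^sub>R v"] t by (simp add: algebra_simps)
    finally show "?q (t *\<^sub>R a) / t \<le> p (a + s *\<^sub>R v) - s * p v"
      using t by (simp add: divide_le_eq mult.commute)
  qed
  then show "?q (t *\<^sub>R a) \<le> t * ?q a" using t by (simp add: divide_le_eq mult.commute)
qed

lemma minimal_sublinear_linear:
  assumes m: "sublinear m" and minimal: "\<And>q. sublinear q \<Longrightarrow> q \<le> m \<Longrightarrow> q = m"
  shows "linear m"
proof -
  have minus: "m (- v) = - m v" for v
  proof -
    have "sublinear_shift m v = m"
      using minimal sublinear_sublinear_shift[OF m] sublinear_shift_le_self[OF m] by blast
    then show ?thesis
      using sublinear_shift_minus[OF m, of v] sublinear_minus_le[OF m, of v] by simp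
  qed
  have add: "m (a + b) = m a + m b" for a b
    using sublinear_add[OF m, of a b] sublinear_add[OF m, of "- a" "- b"] minus[of "a + b"]
      minus[of a] minus[of b] by simp
  have "m (c *\<^sub>R a) = c * m a" for c a
  proof (cases "c \<ge> 0")
    case False
    then have "m ((- c) *\<^sub>R (- a)) = (- c) * m (- a)" by (intro sublinear_scaleR[OF m]) simp
    then show ?thesis using minus[of a] by simp
  qed (rule sublinear_scaleR[OF m])
  with add show ?thesis by (intro linearI) simp_all
qed

lemma sublinear_INF_chain:
  assumes ne: "C \<noteq> {}" and sub: "\<And>q. q \<in> C \<Longrightarrow> sublinear q \<and> q \<le> p"
    and chain: "\<And>q1 q2. q1 \<in> C \<Longrightarrow> q2 \<in> C \<Longrightarrow> q1 \<le> q2 \<or> q2 \<le> q1"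
  shows "sublinear (\<lambda>y. INF q\<in>C. q y)" (is "sublinear ?u")
    and "q \<in> C \<Longrightarrow> (\<lambda>y. INF q\<in>C. q y) \<le> q"
proof -
  have "bdd_below ((\<lambda>q. q y) ` C)" for y
  proof (rule bdd_belowI2)
    fix q assume q: "q \<in> C"
    then have "q (- y) \<le> p (- y)" using sub by (simp add: le_fun_def)
    then show "- p (- y) \<le> q y" using sub[OF q] sublinear_minus_le[of q y] by simp
  qed
  then have lower: "q \<in> C \<Longrightarrow> ?u y \<le> q y" for q y by (rule cINF_lower)
  show "q \<in> C \<Longrightarrow> ?u \<le> q" using lower by (simp add: le_fun_def)
  have greatest: "(\<And>q. q \<in> C \<Longrightarrow> c \<le> q y) \<Longrightarrow> c \<le> ?u y" for c y
    by (rule cINF_greatest[OF ne])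
  show "sublinear ?u"
  proof (rule sublinearI_le)
    fix a b
    have "?u (a + b) - q2 b \<le> q1 a" if q12: "q1 \<in> C" "q2 \<in> C" for q1 q2
    proof -
      obtain q where q: "q \<in> C" "q \<le> q1" "q \<le> q2"
        using chain[OF q12] q12 by blast
      have "?u (a + b) \<le> q a + q b"
        using lower[OF q(1), of "a + b"] sublinear_add[of q a b] sub[OF q(1)] by simp
      also have "\<dots> \<le> q1 a + q2 b" using q by (simp add: add_mono le_fun_def)
      finally show ?thesis by simp
    qed
    then have "?u (a + b) - q2 b \<le> ?u a" if "q2 \<in> C" for q2 using that by (intro greatest)
    then have "?u (a + b) - ?u a \<le> ?u b" by (intro greatest) (auto simp: algebra_simps)
    then show "?u (a + b) \<le> ?u a + ?u b" by simp
  next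
    have "(\<lambda>q. q 0) ` C = {0}" using ne sub sublinear_0 by fastforce
    then show "?u 0 = 0" by simp
  next
    fix t :: real and a assume t: "t > 0"
    have "?u (t *\<^sub>R a) / t \<le> ?u a"
    proof (rule greatest)
      fix q assume q: "q \<in> C"
      have "?u (t *\<^sub>R a) \<le> t * q a"
        using lower[OF q, of "t *\<^sub>R a"] sub[OF q] sublinear_scaleR[of q t a] t by simp
      then show "?u (t *\<^sub>R a) / t \<le> q a" using t by (simp add: divide_le_eq mult.commute)
    qed
    then show "?u (t *\<^sub>R a) \<le> t * ?u a" using t by (simp add: divide_le_eq mult.commute)
  qed
qed

lemma exists_minimal_sublinear_below:
  fixes p :: "'a::real_vector \<Rightarrow> real"
  assumes "sublinear p"
  shows "\<exists>m. sublinear m \<and> m \<le> p \<and> (\<forall>q. sublinear q \<and> q \<le> m \<longrightarrow> q = m)"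
proof -
  define P where "P = {q. sublinear q \<and> q \<le> p}"
  have po: "partial_order_on P (relation_of (\<ge>) P)"
    by (rule partial_order_on_relation_ofI) auto
  have "\<exists>u\<in>P. \<forall>q\<in>C. u \<le> q" if C: "C \<in> Chains (relation_of (\<ge>) P)" for C
  proof (cases "C = {}")
    case True then show ?thesis using assms P_def by blast
  next
    case False
    have CP: "C \<subseteq> P" and chain: "q1 \<in> C \<Longrightarrow> q2 \<in> C \<Longrightarrow> q1 \<le> q2 \<or> q2 \<le> q1" for q1 q2
      using C unfolding Chains_def relation_of_def by blast+
    define u where "u = (\<lambda>y. INF q\<in>C. q y)"
    have sub: "q \<in> C \<Longrightarrow> sublinear q \<and> q \<le> p" for q using CP P_def by auto
    obtain q0 where "q0 \<in> C" using False by blast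
    then have "u \<in> P"
      using sublinear_INF_chain[OF False sub chain] sub[of q0] unfolding u_def P_def
      by (auto intro: order_trans)
    moreover have "\<forall>q\<in>C. u \<le> q"
      using sublinear_INF_chain(2)[OF False sub chain] unfolding u_def by blast
    ultimately show ?thesis by blast
  qed
  from predicate_Zorn[OF po this] obtain m where "m \<in> P" "\<And>q. q \<in> P \<Longrightarrow> q \<le> m \<Longrightarrow> q = m"
    by blast
  then show ?thesis unfolding P_def by (blast intro: order_trans)
qed

lemma exists_linear_norming:
  fixes x :: "'a::real_normed_vector"
  shows "\<exists>f. linear f \<and> (\<forall>y. \<bar>f y\<bar> \<le> norm y) \<and> f x = norm x"
proof -
  obtain m where m: "sublinear m" "m \<le> sublinear_shift norm x"
    and minimal: "\<And>q. sublinear q \<Longrightarrow> q \<le> m \<Longrightarrow> q = m"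
    using exists_minimal_sublinear_below[OF sublinear_sublinear_shift[OF sublinear_norm]] by blast
  have lin: "linear m" by (rule minimal_sublinear_linear[OF m(1) minimal])
  have below: "m y \<le> norm y" for y
    using m(2) sublinear_shift_le_self[OF sublinear_norm, of x] by (auto simp: le_fun_def intro: order_trans)
  have "m (- x) \<le> - norm x"
    using m(2) sublinear_shift_minus[OF sublinear_norm, of x] by (auto simp: le_fun_def intro: order_trans)
  then have "m x = norm x" using below[of x] linear_neg[OF lin, of x] by simp
  moreover have "\<bar>m y\<bar> \<le> norm y" for y
    using below[of y] below[of "- y"] linear_neg[OF lin, of y] by (simp add: abs_le_iff)
  ultimately show ?thesis using lin by blast
qed

section \<open>Strong subdifferentiability via difference quotients\<close>

definition norm_diff_quotient :: "'a::real_normed_vector \<Rightarrow> 'a \<Rightarrow> real \<Rightarrow> real" where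
  "norm_diff_quotient x h t = (norm (x + t *\<^sub>R h) - norm x) / t"

lemma norm_SSD_atI:
  fixes x :: "'a::real_normed_vector"
  assumes "\<And>\<epsilon>. \<epsilon> > 0 \<Longrightarrow> \<exists>\<delta>>0. \<forall>t s h. 0 < t \<and> t < \<delta> \<and> 0 < s \<and> norm h \<le> 1 \<longrightarrow>
      norm_diff_quotient x h t \<le> norm_diff_quotient x h s + \<epsilon>"
  shows "norm_SSD_at x"
proof -
  \<comment> \<open>the infimum of the quotients is their limit at \<open>0\<^sup>+\<close>, the norm being convex\<close>
  define D where "D h = (INF s\<in>{0<..}. norm_diff_quotient x h s)" for h
  have "- norm h \<le> norm_diff_quotient x h s" if s: "s > 0" for h :: 'a and s
  proof -
    have "- (s * norm h) \<le> norm (x + s *\<^sub>R h) - norm x"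
      using norm_triangle_ineq2[of x "x + s *\<^sub>R h"] s by (simp add: norm_minus_commute)
    then show ?thesis unfolding norm_diff_quotient_def using s by (simp add: le_divide_eq mult.commute)
  qed
  then have D_le: "D h \<le> norm_diff_quotient x h t" if "t > 0" for h t
    unfolding D_def by (intro cINF_lower bdd_belowI2) (use that in auto)
  show ?thesis unfolding norm_SSD_at_def
  proof (intro exI[of _ D] allI impI)
    fix \<epsilon> :: real assume e: "\<epsilon> > 0"
    then obtain \<delta> where \<delta>: "\<delta> > 0" and le: "\<forall>t s h. 0 < t \<and> t < \<delta> \<and> 0 < s \<and> norm h \<le> 1 \<longrightarrow>
        norm_diff_quotient x h t \<le> norm_diff_quotient x h s + \<epsilon> / 2"
      using assms[of "\<epsilon> / 2"] by auto
    show "\<exists>\<delta>>0. \<forall>t h. 0 < t \<and> t < \<delta> \<and> norm h \<le> 1 \<longrightarrow>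
        \<bar>(norm (x + t *\<^sub>R h) - norm x) / t - D h\<bar> < \<epsilon>"
    proof (intro exI[of _ \<delta>] conjI allI impI)
      fix t :: real and h :: 'a assume th: "0 < t \<and> t < \<delta> \<and> norm h \<le> 1"
      have "norm_diff_quotient x h t - \<epsilon> / 2 \<le> norm_diff_quotient x h s" if "s > 0" for s
        using le[rule_format, of t s h] th that by linarith
      then have "norm_diff_quotient x h t - \<epsilon> / 2 \<le> D h"
        unfolding D_def by (intro cINF_greatest) auto
      with D_le[of t h] th e show "\<bar>(norm (x + t *\<^sub>R h) - norm x) / t - D h\<bar> < \<epsilon>"
        unfolding norm_diff_quotient_def by auto
    qed (rule \<delta>)
  qed
qed

lemma norm_SSD_at_0: "norm_SSD_at (0::'a::real_normed_vector)"
  unfolding norm_SSD_at_def by (intro exI[of _ norm] allI impI exI[of _ 1]) auto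

lemma norm_SSD_at_scaleR:
  fixes x :: "'a::real_normed_vector"
  assumes "norm_SSD_at x" "c > 0"
  shows "norm_SSD_at (c *\<^sub>R x)"
proof -
  obtain D where D: "\<And>\<epsilon>. \<epsilon> > 0 \<Longrightarrow> \<exists>\<delta>>0. \<forall>t h. 0 < t \<and> t < \<delta> \<and> norm h \<le> 1 \<longrightarrow>
      \<bar>(norm (x + t *\<^sub>R h) - norm x) / t - D h\<bar> < \<epsilon>"
    using assms(1) unfolding norm_SSD_at_def by blast
  have quotient: "(norm (c *\<^sub>R x + t *\<^sub>R h) - norm (c *\<^sub>R x)) / t
      = (norm (x + (t / c) *\<^sub>R h) - norm x) / (t / c)" for t h
  proof -
    have "c *\<^sub>R x + t *\<^sub>R h = c *\<^sub>R (x + (t / c) *\<^sub>R h)" using assms(2) by (simp add: algebra_simps)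
    then have "norm (c *\<^sub>R x + t *\<^sub>R h) = c * norm (x + (t / c) *\<^sub>R h)" using assms(2) by simp
    then show ?thesis using assms(2) by (simp add: field_simps)
  qed
  show ?thesis unfolding norm_SSD_at_def
  proof (intro exI[of _ D] allI impI)
    fix \<epsilon> :: real assume "\<epsilon> > 0"
    then obtain \<delta> where \<delta>: "\<delta> > 0" "\<forall>t h. 0 < t \<and> t < \<delta> \<and> norm h \<le> 1 \<longrightarrow>
        \<bar>(norm (x + t *\<^sub>R h) - norm x) / t - D h\<bar> < \<epsilon>" using D by blast
    show "\<exists>\<delta>>0. \<forall>t h. 0 < t \<and> t < \<delta> \<and> norm h \<le> 1 \<longrightarrow>
        \<bar>(norm (c *\<^sub>R x + t *\<^sub>R h) - norm (c *\<^sub>R x)) / t - D h\<bar> < \<epsilon>"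
      unfolding quotient
    proof (intro exI[of _ "c * \<delta>"] conjI allI impI)
      fix t :: real and h :: 'a assume th: "0 < t \<and> t < c * \<delta> \<and> norm h \<le> 1"
      then have "0 < t / c" "t / c < \<delta>" using assms(2) by (simp_all add: divide_less_eq mult.commute)
      then show "\<bar>(norm (x + (t / c) *\<^sub>R h) - norm x) / (t / c) - D h\<bar> < \<epsilon>"
        using \<delta>(2) th by blast
    qed (use \<delta> assms(2) in simp)
  qed
qed

section \<open>Numerical radius and norming functionals\<close>

text \<open>The existence of norming functionals
  is an assumption of the locale; it is derived from Hahn--Banach for both fields at the end.\<close>

locale normed_space_over =
  fixes sc :: "'k::real_normed_field \<Rightarrow> 'a::real_normed_vector \<Rightarrow> 'a" and re :: "'k \<Rightarrow> real"
  assumes sc_mult: "sc (a * b) x = sc a (sc b x)"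
    and sc_add_left: "sc (a + b) x = sc a x + sc b x"
    and sc_of_real: "sc (of_real r) x = r *\<^sub>R x"
    and norm_sc: "norm (sc a x) = norm a * norm x"
    and re_add: "re (a + b) = re a + re b"
    and re_of_real: "re (of_real r) = r"
    and re_of_real_mult: "re (of_real r * a) = r * re a"
    and re_le_norm: "re a \<le> norm a"
    and exists_norming_functional:
      "x \<noteq> 0 \<Longrightarrow> \<exists>f. is_functional sc f \<and> onorm f = 1 \<and> f x = of_real (norm x)"
begin

lemma re_diff: "re (a - b) = re a - re b"
  using re_add[of a "- b"] re_of_real_mult[of "- 1" b] by simp

lemma sc_scaleR: "sc c (r *\<^sub>R v) = r *\<^sub>R sc c v"
  by (metis mult.commute sc_mult sc_of_real)

lemma functional_bounded_linear: "is_functional sc f \<Longrightarrow> bounded_linear f"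
  unfolding is_functional_def by blast

lemma op_bounded_linear: "is_op sc T \<Longrightarrow> bounded_linear T"
  unfolding is_op_def by blast

lemma functional_add_scaleR:
  "is_functional sc f \<Longrightarrow> f (x + t *\<^sub>R y) = f x + of_real t * f y"
  using functional_bounded_linear[THEN bounded_linear.linear]
  by (simp add: linear_add linear_scale scaleR_conv_of_real)

lemma norm_functional_le: "is_functional sc f \<Longrightarrow> norm (f y) \<le> onorm f * norm y"
  using onorm functional_bounded_linear by blast

lemma norm_functional_comp_le:
  assumes "is_functional sc f" "onorm f = 1" "bounded_linear A"
  shows "norm (f (A y)) \<le> onorm A * norm y"
  using norm_functional_le[OF assms(1), of "A y"] onorm[OF assms(3), of y] assms(2) by simp

lemma exists_PiX: "norm u = 1 \<Longrightarrow> \<exists>f. (u, f) \<in> PiX sc"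
  using exists_norming_functional[of u] unfolding PiX_def by fastforce

lemma norm_PiX_le_onorm:
  assumes "is_op sc T" "(x, f) \<in> PiX sc"
  shows "norm (f (T x)) \<le> onorm T"
proof -
  have f: "is_functional sc f" "onorm f = 1" "norm x = 1" using assms(2) unfolding PiX_def by auto
  then show ?thesis
    using norm_functional_comp_le[OF f(1,2) op_bounded_linear[OF assms(1)], of x] f(3) by simp
qed

lemma norm_PiX_le_numrad:
  assumes "is_op sc T" "(x, f) \<in> PiX sc"
  shows "norm (f (T x)) \<le> numrad sc T"
proof -
  have "bdd_above ((\<lambda>p. norm (snd p (T (fst p)))) ` PiX sc)"
    by (rule bdd_aboveI2[where M="onorm T"]) (auto intro: norm_PiX_le_onorm[OF assms(1)])
  then show ?thesis unfolding numrad_def using cSUP_upper[OF assms(2)] by fastforce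
qed

lemma numrad_le_onorm: "is_op sc T \<Longrightarrow> PiX sc \<noteq> {} \<Longrightarrow> numrad sc T \<le> onorm T"
  unfolding numrad_def by (rule cSUP_least) (auto intro: norm_PiX_le_onorm)

lemma numrad_nonneg: "is_op sc T \<Longrightarrow> PiX sc \<noteq> {} \<Longrightarrow> 0 \<le> numrad sc T"
  using norm_PiX_le_numrad by (metis ex_in_conv norm_ge_zero order_trans prod.collapse)

lemma numrad_ge_1:
  assumes "num_index sc = 1" "is_op sc T" "onorm T = 1" "PiX sc \<noteq> {}"
  shows "1 \<le> numrad sc T"
proof -
  have "bdd_below {numrad sc T | T. is_op sc T \<and> onorm T = 1}"
    by (rule bdd_belowI[where m=0]) (use numrad_nonneg assms(4) in auto)
  then have "num_index sc \<le> numrad sc T" unfolding num_index_def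
    by (intro cInf_lower) (use assms in auto)
  then show ?thesis using assms by simp
qed

lemma onorm_le_numrad:
  assumes idx: "num_index sc = 1" and S: "is_op sc S" and ne: "PiX sc \<noteq> {}"
  shows "onorm S \<le> numrad sc S"
proof (cases "onorm S = 0")
  case True then show ?thesis using numrad_nonneg[OF S ne] by simp
next
  case False
  have blS: "bounded_linear S" by (rule op_bounded_linear[OF S])
  then have pos: "onorm S > 0" using False onorm_pos_le by (metis less_eq_real_def)
  define T where "T = (\<lambda>y. inverse (onorm S) *\<^sub>R S y)"
  have blT: "bounded_linear T"
    unfolding T_def by (rule bounded_linear_compose[OF bounded_linear_scaleR_right blS])
  have "is_op sc T" using S blT unfolding is_op_def T_def by (simp add: sc_scaleR)
  moreover have "onorm T = 1" unfolding T_def using onorm_scaleR[OF blS] pos by simp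
  ultimately have "1 \<le> numrad sc T" using numrad_ge_1[OF idx _ _ ne] by blast
  also have "numrad sc T \<le> numrad sc S / onorm S"
  proof -
    have "norm (f (T x)) \<le> numrad sc S / onorm S" if xf: "(x, f) \<in> PiX sc" for x f
    proof -
      from xf have "f (T x) = inverse (onorm S) *\<^sub>R f (S x)"
        unfolding T_def PiX_def by (auto intro: linear_scale bounded_linear.linear functional_bounded_linear)
      then show ?thesis
        using norm_PiX_le_numrad[OF S xf] pos by (simp add: divide_right_mono field_simps)
    qed
    then show ?thesis unfolding numrad_def[of sc T] by (intro cSUP_least[OF ne]) auto
  qed
  finally show ?thesis using pos by (simp add: le_divide_eq)
qed

lemma rank_one_op:
  assumes g: "is_functional sc g" and u: "norm u = 1"
  shows "is_op sc (\<lambda>y. sc (g y) u)" and "onorm (\<lambda>y. sc (g y) u) = onorm g"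
proof -
  have lin: "linear g" by (rule bounded_linear.linear[OF functional_bounded_linear[OF g]])
  have norm_eq: "norm (sc (g y) u) = norm (g y)" for y using norm_sc u by simp
  have "bounded_linear (\<lambda>y. sc (g y) u)"
  proof (rule bounded_linear_intro[where K="onorm g"])
    show "sc (g (a + b)) u = sc (g a) u + sc (g b) u" for a b
      by (simp add: linear_add[OF lin] sc_add_left)
    show "sc (g (r *\<^sub>R a)) u = r *\<^sub>R sc (g a) u" for r a
      by (simp add: linear_scale[OF lin] scaleR_conv_of_real sc_mult sc_of_real)
    show "norm (sc (g a) u) \<le> norm a * onorm g" for a
      using norm_functional_le[OF g, of a] norm_eq by (simp add: mult.commute)
  qed
  moreover have "sc (g (sc c y)) u = sc c (sc (g y) u)" for c y
    using g unfolding is_functional_def by (simp add: sc_mult)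
  ultimately show "is_op sc (\<lambda>y. sc (g y) u)" unfolding is_op_def by blast
  show "onorm (\<lambda>y. sc (g y) u) = onorm g" unfolding onorm_def by (simp add: norm_eq)
qed

lemma Lpp_nu_unimodular_approx:
  assumes idx: "num_index sc = 1" and nu: "Lpp_nu sc" and u: "norm u = 1" and e: "e > 0"
  obtains \<eta> where "\<eta> > 0" and
    "\<And>g. is_functional sc g \<Longrightarrow> onorm g = 1 \<Longrightarrow> norm (g u) > 1 - \<eta> \<Longrightarrow>
      \<exists>z. is_functional sc z \<and> norm (z u) = 1 \<and> (\<forall>y. norm (z y) \<le> norm y) \<and>
          (\<forall>y. norm (z y - g y) \<le> e * norm y)"
proof -
  obtain us where us: "(u, us) \<in> PiX sc" using exists_PiX[OF u] by blast
  then have usf: "is_functional sc us" "onorm us = 1" "us u = 1" unfolding PiX_def by auto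
  have ne: "PiX sc \<noteq> {}" using us by blast
  from nu e us obtain \<eta> where \<eta>: "\<eta> > 0" and lpp:
    "\<And>T. is_op sc T \<and> numrad sc T = 1 \<and> norm (us (T u)) > 1 - \<eta> \<Longrightarrow>
      \<exists>S. is_op sc S \<and> numrad sc S = 1 \<and> norm (us (S u)) = 1 \<and> onorm (\<lambda>y. S y - T y) < e"
    unfolding Lpp_nu_def by blast
  show ?thesis
  proof (rule that[OF \<eta>])
    fix g assume g: "is_functional sc g" "onorm g = 1" "norm (g u) > 1 - \<eta>"
    define T where "T = (\<lambda>y. sc (g y) u)"
    have T: "is_op sc T" "onorm T = 1" using rank_one_op[OF g(1) u] g(2) unfolding T_def by auto
    have usT: "us (T y) = g y" for y using usf(1,3) unfolding T_def is_functional_def by simp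
    have "numrad sc T = 1" using numrad_ge_1[OF idx T ne] numrad_le_onorm[OF T(1) ne] T(2) by simp
    then obtain S where S: "is_op sc S" "numrad sc S = 1" "norm (us (S u)) = 1"
        "onorm (\<lambda>y. S y - T y) < e"
      using lpp[of T] T(1) g(3) usT[of u] by auto
    have blS: "bounded_linear S" and blT: "bounded_linear T"
      using S(1) T(1) by (simp_all add: op_bounded_linear)
    have "onorm S \<le> 1" using onorm_le_numrad[OF idx S(1) ne] S(2) by simp
    show "\<exists>z. is_functional sc z \<and> norm (z u) = 1 \<and> (\<forall>y. norm (z y) \<le> norm y) \<and>
          (\<forall>y. norm (z y - g y) \<le> e * norm y)"
    proof (intro exI[of _ "\<lambda>y. us (S y)"] conjI allI)
      show "is_functional sc (\<lambda>y. us (S y))"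
        using usf(1) S(1) unfolding is_functional_def is_op_def by (auto intro: bounded_linear_compose)
      show "norm (us (S u)) = 1" by (rule S(3))
      fix y
      have "norm (us (S y)) \<le> onorm S * norm y" by (rule norm_functional_comp_le[OF usf(1,2) blS])
      also have "\<dots> \<le> norm y" using mult_right_mono[OF \<open>onorm S \<le> 1\<close> norm_ge_zero[of y]] by simp
      finally show "norm (us (S y)) \<le> norm y" .
      have "norm (us (S y) - g y) = norm (us (S y - T y))"
        using usT linear_diff[OF bounded_linear.linear[OF functional_bounded_linear[OF usf(1)]]] by simp
      also have "\<dots> \<le> onorm (\<lambda>y. S y - T y) * norm y"
        by (rule norm_functional_comp_le[OF usf(1,2) bounded_linear_sub[OF blS blT]])
      also have "\<dots> \<le> e * norm y" using S(4) by (simp add: mult_right_mono)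
      finally show "norm (us (S y) - g y) \<le> e * norm y" .
    qed
  qed
qed

lemma functional_rotate_unimodular:
  assumes z: "is_functional sc z" "norm (z u) = 1" "\<And>y. norm (z y) \<le> norm y"
  shows "is_functional sc (\<lambda>y. inverse (z u) * z y)" and "inverse (z u) * z u = 1"
    and "norm (inverse (z u) * z y) \<le> norm y"
    and "norm (inverse (z u) * z y - z y) \<le> norm (1 - z u) * norm y"
proof -
  have zu: "z u \<noteq> 0" using z(2) by auto
  have "bounded_linear (\<lambda>y. inverse (z u) * z y)"
    by (rule bounded_linear_compose[OF bounded_linear_mult_right functional_bounded_linear[OF z(1)]])
  then show "is_functional sc (\<lambda>y. inverse (z u) * z y)"
    using z(1) unfolding is_functional_def by (simp add: algebra_simps)
  show "inverse (z u) * z u = 1" using zu by simp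
  show norm_le: "norm (inverse (z u) * z y) \<le> norm y" using z(2,3) by (simp add: norm_mult norm_inverse)
  have "inverse (z u) * z y - z y = (1 - z u) * (inverse (z u) * z y)" using zu by (simp add: field_simps)
  then show "norm (inverse (z u) * z y - z y) \<le> norm (1 - z u) * norm y"
    using mult_left_mono[OF norm_le norm_ge_zero[of "1 - z u"]] by (simp add: norm_mult)
qed

lemma norming_functional_approx:
  assumes idx: "num_index sc = 1" and nu: "Lpp_nu sc" and u: "norm u = 1" and e: "\<epsilon> > 0"
  obtains \<eta> where "\<eta> > 0" and
    "\<And>g. is_functional sc g \<Longrightarrow> onorm g = 1 \<Longrightarrow> norm (g u - 1) < \<eta> \<Longrightarrow>
      \<exists>w. is_functional sc w \<and> w u = 1 \<and> (\<forall>y. norm (w y) \<le> norm y) \<and>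
          (\<forall>y. norm (w y - g y) \<le> \<epsilon> * norm y)"
proof -
  obtain \<eta> where \<eta>: "\<eta> > 0" and unimodular:
    "\<And>g. is_functional sc g \<Longrightarrow> onorm g = 1 \<Longrightarrow> norm (g u) > 1 - \<eta> \<Longrightarrow>
      \<exists>z. is_functional sc z \<and> norm (z u) = 1 \<and> (\<forall>y. norm (z y) \<le> norm y) \<and>
          (\<forall>y. norm (z y - g y) \<le> \<epsilon> / 3 * norm y)"
    using Lpp_nu_unimodular_approx[OF idx nu u, of "\<epsilon> / 3"] e by auto
  show ?thesis
  proof (rule that[of "min \<eta> (\<epsilon> / 3)"])
    show "min \<eta> (\<epsilon> / 3) > 0" using \<eta> e by simp
    fix g assume g: "is_functional sc g" "onorm g = 1" "norm (g u - 1) < min \<eta> (\<epsilon> / 3)"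
    have "norm (g u) > 1 - \<eta>"
      using g(3) norm_triangle_ineq2[of 1 "g u"] by (simp add: norm_minus_commute)
    then obtain z where z: "is_functional sc z" "norm (z u) = 1" "\<And>y. norm (z y) \<le> norm y"
        and z_near_g: "\<And>y. norm (z y - g y) \<le> \<epsilon> / 3 * norm y"
      using unimodular g(1,2) by blast
    have "norm (1 - z u) \<le> norm (1 - g u) + norm (g u - z u)"
      using norm_triangle_ineq[of "1 - g u" "g u - z u"] by simp
    also have "\<dots> \<le> 2 * \<epsilon> / 3"
      using g(3) z_near_g[of u] u by (simp add: norm_minus_commute)
    finally have near_1: "norm (1 - z u) \<le> 2 * \<epsilon> / 3" .
    have "norm (inverse (z u) * z y - g y) \<le> \<epsilon> * norm y" for y
    proof -
      have "norm (inverse (z u) * z y - z y) \<le> 2 * \<epsilon> / 3 * norm y"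
        using functional_rotate_unimodular(4)[OF z, of y] mult_right_mono[OF near_1 norm_ge_zero[of y]]
        by linarith
      then show ?thesis
        using z_near_g[of y] norm_triangle_ineq[of "inverse (z u) * z y - z y" "z y - g y"] by simp
    qed
    then show "\<exists>w. is_functional sc w \<and> w u = 1 \<and> (\<forall>y. norm (w y) \<le> norm y) \<and>
          (\<forall>y. norm (w y - g y) \<le> \<epsilon> * norm y)"
      using functional_rotate_unimodular(1-3)[OF z] by blast
  qed
qed

lemma re_le_norm_diff_quotient:
  assumes w: "is_functional sc w" "w x = of_real (norm x)" "\<And>y. norm (w y) \<le> norm y"
    and s: "s > 0"
  shows "re (w h) \<le> norm_diff_quotient x h s"
proof -
  have "norm x + s * re (w h) = re (w (x + s *\<^sub>R h))"
    using functional_add_scaleR[OF w(1)] w(2) by (simp add: re_add re_of_real re_of_real_mult)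
  also have "\<dots> \<le> norm (x + s *\<^sub>R h)" using re_le_norm w(3) by (blast intro: order_trans)
  finally show ?thesis unfolding norm_diff_quotient_def using s by (simp add: le_divide_eq mult.commute)
qed

lemma norm_diff_quotient_le_re:
  assumes g: "is_functional sc g" "onorm g = 1" "g (x + t *\<^sub>R h) = of_real (norm (x + t *\<^sub>R h))"
    and t: "t > 0"
  shows "norm_diff_quotient x h t \<le> re (g h)"
proof -
  have "norm (x + t *\<^sub>R h) = re (g (x + t *\<^sub>R h))" using g(3) by (simp add: re_of_real)
  also have "\<dots> = re (g x) + t * re (g h)"
    using functional_add_scaleR[OF g(1)] by (simp add: re_add re_of_real_mult)
  finally have "norm (x + t *\<^sub>R h) = re (g x) + t * re (g h)" .
  moreover have "re (g x) \<le> norm x"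
    using re_le_norm[of "g x"] norm_functional_le[OF g(1), of x] g(2) by simp
  ultimately show ?thesis unfolding norm_diff_quotient_def using t by (simp add: divide_le_eq mult.commute)
qed

lemma norming_functional_near_1:
  assumes g: "is_functional sc g" "onorm g = 1" "g (u + t *\<^sub>R h) = of_real (norm (u + t *\<^sub>R h))"
    and u: "norm u = 1" and h: "norm h \<le> 1" and t: "t \<ge> 0"
  shows "norm (g u - 1) \<le> 2 * t"
proof -
  have "g u - 1 = of_real (norm (u + t *\<^sub>R h) - 1) - of_real t * g h"
    using functional_add_scaleR[OF g(1)] g(3) by (simp add: algebra_simps)
  also have "norm \<dots> \<le> \<bar>norm (u + t *\<^sub>R h) - 1\<bar> + t * norm (g h)"
    using norm_triangle_ineq4[of "of_real (norm (u + t *\<^sub>R h) - 1) :: 'k" "of_real t * g h"] t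
    by (simp only: norm_mult norm_of_real abs_of_nonneg)
  also have "\<dots> \<le> t + t * 1"
  proof (rule add_mono)
    show "\<bar>norm (u + t *\<^sub>R h) - 1\<bar> \<le> t"
      using norm_triangle_ineq3[of "u + t *\<^sub>R h" u] mult_right_le_one_le[OF t norm_ge_zero h] u t
      by simp
    show "t * norm (g h) \<le> t * 1"
      using norm_functional_le[OF g(1), of h] g(2) h t by (intro mult_left_mono) simp_all
  qed
  finally show ?thesis by simp
qed

lemma norm_SSD_at_unit:
  fixes u :: 'a
  assumes idx: "num_index sc = 1" and nu: "Lpp_nu sc" and u: "norm u = 1"
  shows "norm_SSD_at u"
proof (rule norm_SSD_atI)
  fix \<epsilon> :: real assume e: "\<epsilon> > 0"
  obtain \<eta> where \<eta>: "\<eta> > 0" and approx: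
    "\<And>g. is_functional sc g \<Longrightarrow> onorm g = 1 \<Longrightarrow> norm (g u - 1) < \<eta> \<Longrightarrow>
      \<exists>w. is_functional sc w \<and> w u = 1 \<and> (\<forall>y. norm (w y) \<le> norm y) \<and>
          (\<forall>y. norm (w y - g y) \<le> \<epsilon> * norm y)"
    using norming_functional_approx[OF idx nu u e] by blast
  show "\<exists>\<delta>>0. \<forall>t s h. 0 < t \<and> t < \<delta> \<and> 0 < s \<and> norm h \<le> 1 \<longrightarrow>
      norm_diff_quotient u h t \<le> norm_diff_quotient u h s + \<epsilon>"
  proof (intro exI[of _ "min (\<eta> / 2) 1"] conjI allI impI)
    fix t s :: real and h :: 'a assume "0 < t \<and> t < min (\<eta> / 2) 1 \<and> 0 < s \<and> norm h \<le> 1"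
    then have t: "0 < t" "t < \<eta> / 2" "t < 1" and s: "0 < s" and h: "norm h \<le> 1" by auto
    have "u + t *\<^sub>R h \<noteq> 0"
    proof
      assume "u + t *\<^sub>R h = 0"
      then have "norm u = t * norm h" using t(1) by (simp add: eq_neg_iff_add_eq_0[symmetric])
      then show False using u mult_right_le_one_le[of t "norm h"] h t by simp
    qed
    then obtain g where g: "is_functional sc g" "onorm g = 1"
        "g (u + t *\<^sub>R h) = of_real (norm (u + t *\<^sub>R h))"
      using exists_norming_functional by blast
    have "norm (g u - 1) < \<eta>" using norming_functional_near_1[OF g u h] t by simp
    then obtain w where w: "is_functional sc w" "w u = 1" "\<And>y. norm (w y) \<le> norm y"
        "norm (w h - g h) \<le> \<epsilon> * norm h"
      using approx g(1,2) by blast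
    have "norm_diff_quotient u h t \<le> re (g h)" by (rule norm_diff_quotient_le_re[OF g t(1)])
    also have "\<dots> \<le> re (w h) + \<epsilon>"
    proof -
      have "re (g h) - re (w h) \<le> norm (w h - g h)"
        using re_le_norm[of "g h - w h"] by (simp add: re_diff norm_minus_commute)
      also have "\<dots> \<le> \<epsilon>" using w(4) mult_left_le[OF h less_imp_le[OF e]] by linarith
      finally show ?thesis by simp
    qed
    also have "re (w h) \<le> norm_diff_quotient u h s"
      by (rule re_le_norm_diff_quotient[OF w(1) _ w(3) s]) (simp add: w(2) u)
    finally show "norm_diff_quotient u h t \<le> norm_diff_quotient u h s + \<epsilon>" by simp
  qed (use \<eta> in simp)
qed

theorem norm_SSD_everywhere:
  fixes x :: 'a
  assumes idx: "num_index sc = 1" and nu: "Lpp_nu sc"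
  shows "norm_SSD_at x"
proof (cases "x = 0")
  case True then show ?thesis using norm_SSD_at_0 by simp
next
  case False
  have "norm_SSD_at (x /\<^sub>R norm x)" by (rule norm_SSD_at_unit[OF idx nu]) (use False in simp)
  then show ?thesis using norm_SSD_at_scaleR[of "x /\<^sub>R norm x" "norm x"] False by simp
qed

end

section \<open>Real and complex scalars\<close>

lemma onorm_eq_1:
  assumes "bounded_linear f" "\<And>y. norm (f y) \<le> norm y" "x \<noteq> 0" "norm (f x) = norm x"
  shows "onorm f = 1"
proof (rule antisym)
  show "onorm f \<le> 1" by (rule onorm_bound) (use assms in auto)
  have "norm x \<le> onorm f * norm x" using onorm[OF assms(1), of x] assms(4) by simp
  then show "1 \<le> onorm f" using assms(3) by simp
qed

lemma normed_space_over_real: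
  "normed_space_over (scaleR :: real \<Rightarrow> 'a::real_normed_vector \<Rightarrow> 'a) (\<lambda>r. r)"
proof
  fix x :: 'a assume "x \<noteq> 0"
  obtain f where f: "linear f" "\<And>y. \<bar>f y\<bar> \<le> norm y" "f x = norm x"
    using exists_linear_norming by blast
  have "bounded_linear f"
    by (rule bounded_linear_intro[where K=1]) (use f in \<open>auto simp: linear_add linear_scale\<close>)
  moreover have "onorm f = 1" by (rule onorm_eq_1[OF calculation]) (use f \<open>x \<noteq> 0\<close> in auto)
  ultimately show "\<exists>f. is_functional (*\<^sub>R) f \<and> onorm f = 1 \<and> f x = of_real (norm x)"
    using f unfolding is_functional_def by (auto simp: linear_scale)
qed (auto simp: scaleR_add_left)

definition complexification :: "(complex \<Rightarrow> 'a \<Rightarrow> 'a) \<Rightarrow> ('a \<Rightarrow> real) \<Rightarrow> 'a \<Rightarrow> complex" where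
  "complexification sc g y = Complex (g y) (- g (sc \<i> y))"

lemma cplx_action_decompose:
  assumes "cplx_action sc"
  shows "sc c y = Re c *\<^sub>R y + Im c *\<^sub>R sc \<i> y"
proof -
  have "c = complex_of_real (Re c) + complex_of_real (Im c) * \<i>" by (simp add: complex_eq_iff)
  then have "sc c y = sc (complex_of_real (Re c) + complex_of_real (Im c) * \<i>) y"
    by (rule arg_cong)
  also have "\<dots> = Re c *\<^sub>R y + Im c *\<^sub>R sc \<i> y"
    using assms unfolding cplx_action_def by simp
  finally show ?thesis .
qed

lemma complexification_sc:
  assumes sc: "cplx_action sc" and g: "linear g"
  shows "complexification sc g (sc c y) = c * complexification sc g y"
proof -
  have "sc \<i> (sc c y) = sc (\<i> * c) y" using sc unfolding cplx_action_def by simp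
  also have "\<dots> = Re c *\<^sub>R sc \<i> y - Im c *\<^sub>R y"
    by (simp only: cplx_action_decompose[OF sc, of "\<i> * c" y]) simp
  finally have "g (sc \<i> (sc c y)) = Re c * g (sc \<i> y) - Im c * g y"
    by (simp add: linear_diff[OF g] linear_scale[OF g])
  moreover have "g (sc c y) = Re c * g y + Im c * g (sc \<i> y)"
    by (simp only: cplx_action_decompose[OF sc, of c y]) (simp add: linear_add[OF g] linear_scale[OF g])
  ultimately show ?thesis
    unfolding complexification_def by (simp add: complex_eq_iff algebra_simps)
qed

lemma Re_complexification: "Re (complexification sc g y) = g y"
  unfolding complexification_def by simp

lemma norm_complexification_le:
  assumes sc: "cplx_action sc" and g: "linear g" "\<And>y. \<bar>g y\<bar> \<le> norm y"
  shows "norm (complexification sc g y) \<le> norm y"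
proof (cases "complexification sc g y = 0")
  case False
  define z where "z = complexification sc g y"
  \<comment> \<open>rotating \<open>y\<close> by the unimodular \<open>c\<close> makes the value real, where it is governed by \<open>g\<close>\<close>
  define c where "c = cnj z / complex_of_real (cmod z)"
  have "cmod c = 1" using False unfolding c_def z_def by (simp add: norm_divide)
  have "c * z = complex_of_real (cmod z)"
    using False complex_norm_square[of z] unfolding c_def z_def
    by (simp add: field_simps power2_eq_square)
  then have "cmod z = g (sc c y)"
    using complexification_sc[OF sc g(1), of c y] Re_complexification[of sc g] unfolding z_def
    by (metis Re_complex_of_real)
  also have "\<dots> \<le> norm (sc c y)" using g(2) by (rule abs_le_D1)
  also have "\<dots> = norm y" using sc \<open>cmod c = 1\<close> unfolding cplx_action_def by simp
  finally show ?thesis unfolding z_def .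
qed simp

lemma normed_space_over_complex:
  fixes sc :: "complex \<Rightarrow> 'a::real_normed_vector \<Rightarrow> 'a"
  assumes sc: "cplx_action sc"
  shows "normed_space_over sc Re"
proof
  fix x :: 'a assume x: "x \<noteq> 0"
  obtain g where g: "linear g" "\<And>y. \<bar>g y\<bar> \<le> norm y" "g x = norm x"
    using exists_linear_norming by blast
  define f where "f = complexification sc g"
  have f_sc: "f (sc c y) = c * f y" for c y
    unfolding f_def by (rule complexification_sc[OF sc g(1)])
  have f_le: "norm (f y) \<le> norm y" for y
    unfolding f_def by (rule norm_complexification_le[OF sc g(1,2)])
  have "bounded_linear f"
  proof (rule bounded_linear_intro[where K=1])
    show "f (a + b) = f a + f b" for a b
      using sc unfolding f_def complexification_def cplx_action_def
      by (simp add: linear_add[OF g(1)] complex_eq_iff)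
    show "f (r *\<^sub>R a) = r *\<^sub>R f a" for r a
      using f_sc[of "complex_of_real r" a] sc unfolding cplx_action_def by (simp add: scaleR_conv_of_real)
  qed (simp add: f_le)
  moreover have "f x = complex_of_real (norm x)"
  proof -
    have "Re (f x) = norm x" unfolding f_def Re_complexification by (rule g(3))
    moreover have "(Re (f x))\<^sup>2 + (Im (f x))\<^sup>2 \<le> (norm x)\<^sup>2"
      using f_le[of x] by (simp add: cmod_power2[symmetric] power_mono)
    ultimately show ?thesis by (simp add: complex_eq_iff)
  qed
  moreover have "onorm f = 1" by (rule onorm_eq_1[OF calculation(1) f_le x]) (simp add: calculation(2))
  ultimately show "\<exists>f. is_functional sc f \<and> onorm f = 1 \<and> f x = complex_of_real (norm x)"
    using f_sc unfolding is_functional_def by blast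
qed (use sc in \<open>simp_all add: cplx_action_def complex_Re_le_cmod\<close>)

theorem proposition3p2:
  shows "(num_index (scaleR :: real \<Rightarrow> 'a::banach \<Rightarrow> 'a) = 1 \<and> Lpp_nu (scaleR :: real \<Rightarrow> 'a \<Rightarrow> 'a)
            \<longrightarrow> (\<forall>x::'a. norm_SSD_at x))
      \<and> (\<forall>sc :: complex \<Rightarrow> 'b::banach \<Rightarrow> 'b. cplx_action sc \<and> num_index sc = 1 \<and> Lpp_nu sc
            \<longrightarrow> (\<forall>x::'b. norm_SSD_at x))"
  using normed_space_over.norm_SSD_everywhere[OF normed_space_over_real]
    normed_space_over.norm_SSD_everywhere[OF normed_space_over_complex]
  by blast

end
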